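(* Let $k,l\ge1$ and $1\le r\le 2k(2l+1)$. Let $\overline{\mathcal{B}}(2k,2l+1;r)$ be the subset of $\mathcal{B}(2k,2l+1;r)$ consisting of boards whose board partition $(\lambda_1,\lambda_2,\lambda_3,\lambda_4,\delta_1,\delta_2)$ satisfies: (i) $\lambda_1\ge\lambda_i$ for all $i>1$; (ii) if $\lambda_1=\lambda_2$ then $\lambda_3\ge\lambda_4$; (iii) if $\lambda_1=\lambda_3$ then $\lambda_2\ge\lambda_4$, and if in addition $\lambda_2=\lambda_4$ then $\delta_1\ge\delta_2$; (iv) if $\lambda_1=\lambda_4$ then $\lambda_2\ge\lambda_3$, and if in addition $\lambda_2=\lambda_3$ then $\delta_1\ge\delta_2$. Then: (1) $\overline{\mathcal{B}}(2k,2l+1;r)$ is a disjoint union of sets each consisting of all boards in $\mathcal{B}(2k,2l+1;r)$ with some fixed board partition; (2) every board of $\mathcal{B}(2k,2l+1;r)$ is equivalent under $\langle H,V\rangle$ to some board of $\overline{\mathcal{B}}(2k,2l+1;r)$; (3) if two boards of $\overline{\mathcal{B}}(2k,2l+1;r)$ are equivalent under $\langle H,V\rangle$, they have the same board partition.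
   Context: A $2k\times(2l+1)$ grid ($2k$ rows numbered top to bottom, $2l+1$ columns numbered left to right); $\mathcal{B}(2k,2l+1;r)$ is the set of boards, i.e. subsets of exactly $r$ blocked cells. The symmetry group is $\langle H,V\rangle=\{R_0,H,V,R_{180}\}$ ($H$: reflection across the horizontal midline; $V$: across the vertical midline; $R_{180}$: 180-degree rotation); boards are equivalent if some element maps one to the other. The grid is divided into six regions: $\Lambda_1$ = rows $1..k$, cols $1..l$; $\Lambda_2$ = rows $1..k$, cols $l+2..2l+1$; $\Lambda_3$ = rows $k+1..2k$, cols $l+2..2l+1$; $\Lambda_4$ = rows $k+1..2k$, cols $1..l$; $\Delta_1$ = rows $1..k$, col $l+1$; $\Delta_2$ = rows $k+1..2k$, col $l+1$. The board partition $(\lambda_1,\lambda_2,\lambda_3,\lambda_4,\delta_1,\delta_2)$ records the number of blocked cells $\lambda_i$ in $\Lambda_i$ and $\delta_i$ in $\Delta_i$. *)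

theory Defs
  imports Main "HOL-Library.Disjoint_Sets"
begin

text \<open>Cells are pairs (row, column), rows 1..2k (top to bottom), columns 1..2l+1
  (left to right).\<close>

type_synonym cell = "nat \<times> nat"

definition grid :: "nat \<Rightarrow> nat \<Rightarrow> cell set" where
  "grid k l = {1..2*k} \<times> {1..2*l+1}"

definition boards :: "nat \<Rightarrow> nat \<Rightarrow> nat \<Rightarrow> cell set set" where
  "boards k l r = {b. b \<subseteq> grid k l \<and> card b = r}"

definition reflH :: "nat \<Rightarrow> nat \<Rightarrow> cell \<Rightarrow> cell" where
  "reflH k l = (\<lambda>(i, j). (2*k + 1 - i, j))"

definition reflV :: "nat \<Rightarrow> nat \<Rightarrow> cell \<Rightarrow> cell" where
  "reflV k l = (\<lambda>(i, j). (i, 2*l + 2 - j))"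

definition rot180 :: "nat \<Rightarrow> nat \<Rightarrow> cell \<Rightarrow> cell" where
  "rot180 k l = (\<lambda>(i, j). (2*k + 1 - i, 2*l + 2 - j))"

definition symgroup :: "nat \<Rightarrow> nat \<Rightarrow> (cell \<Rightarrow> cell) set" where
  "symgroup k l = {id, reflH k l, reflV k l, rot180 k l}"

definition equivalent :: "nat \<Rightarrow> nat \<Rightarrow> cell set \<Rightarrow> cell set \<Rightarrow> bool" where
  "equivalent k l b b' \<longleftrightarrow> (\<exists>g\<in>symgroup k l. g ` b = b')"

definition Lambda1 :: "nat \<Rightarrow> nat \<Rightarrow> cell set" where
  "Lambda1 k l = {1..k} \<times> {1..l}"
definition Lambda2 :: "nat \<Rightarrow> nat \<Rightarrow> cell set" where
  "Lambda2 k l = {1..k} \<times> {l+2..2*l+1}"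
definition Lambda3 :: "nat \<Rightarrow> nat \<Rightarrow> cell set" where
  "Lambda3 k l = {k+1..2*k} \<times> {l+2..2*l+1}"
definition Lambda4 :: "nat \<Rightarrow> nat \<Rightarrow> cell set" where
  "Lambda4 k l = {k+1..2*k} \<times> {1..l}"
definition Delta1 :: "nat \<Rightarrow> nat \<Rightarrow> cell set" where
  "Delta1 k l = {1..k} \<times> {l+1}"
definition Delta2 :: "nat \<Rightarrow> nat \<Rightarrow> cell set" where
  "Delta2 k l = {k+1..2*k} \<times> {l+1}"

type_synonym bpart = "nat \<times> nat \<times> nat \<times> nat \<times> nat \<times> nat"

definition board_partition :: "nat \<Rightarrow> nat \<Rightarrow> cell set \<Rightarrow> bpart" where
  "board_partition k l b =
     (card (b \<inter> Lambda1 k l), card (b \<inter> Lambda2 k l), card (b \<inter> Lambda3 k l),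
      card (b \<inter> Lambda4 k l), card (b \<inter> Delta1 k l), card (b \<inter> Delta2 k l))"

definition good_partition :: "bpart \<Rightarrow> bool" where
  "good_partition p = (case p of (l1, l2, l3, l4, d1, d2) \<Rightarrow>
      (l1 \<ge> l2 \<and> l1 \<ge> l3 \<and> l1 \<ge> l4)
    \<and> (l1 = l2 \<longrightarrow> l3 \<ge> l4)
    \<and> (l1 = l3 \<longrightarrow> l2 \<ge> l4 \<and> (l2 = l4 \<longrightarrow> d1 \<ge> d2))
    \<and> (l1 = l4 \<longrightarrow> l2 \<ge> l3 \<and> (l2 = l3 \<longrightarrow> d1 \<ge> d2)))"

definition boards_bar :: "nat \<Rightarrow> nat \<Rightarrow> nat \<Rightarrow> cell set set" where
  "boards_bar k l r = {b \<in> boards k l r. good_partition (board_partition k l b)}"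

definition partition_class :: "nat \<Rightarrow> nat \<Rightarrow> nat \<Rightarrow> bpart \<Rightarrow> cell set set" where
  "partition_class k l r p = {b \<in> boards k l r. board_partition k l b = p}"

end

theory Submission
  imports Defs
begin

text \<open>The three non-trivial symmetries act on a board partition
  \<open>(\<lambda>\<^sub>1, \<lambda>\<^sub>2, \<lambda>\<^sub>3, \<lambda>\<^sub>4, \<delta>\<^sub>1, \<delta>\<^sub>2)\<close> by permuting its entries, so the
  partitions of equivalent boards form an orbit of size at most four. Conditions (i)--(iv)
  single out exactly one good element of every such orbit: a partition and a different
  element of its orbit are never both good, and some element is always good. Being good
  depends only on the partition, so the good boards are a union of partition classes.\<close>

fun partition_reflH :: "bpart \<Rightarrow> bpart" where
  "partition_reflH (a1, a2, a3, a4, d1, d2) = (a4, a3, a2, a1, d2, d1)"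

fun partition_reflV :: "bpart \<Rightarrow> bpart" where
  "partition_reflV (a1, a2, a3, a4, d1, d2) = (a2, a1, a4, a3, d1, d2)"

fun partition_rot180 :: "bpart \<Rightarrow> bpart" where
  "partition_rot180 (a1, a2, a3, a4, d1, d2) = (a3, a4, a1, a2, d2, d1)"

definition partition_orbit :: "bpart \<Rightarrow> bpart set" where
  "partition_orbit p = {p, partition_reflH p, partition_reflV p, partition_rot180 p}"

lemma good_partition_in_orbit: "\<exists>q\<in>partition_orbit p. good_partition q"
proof -
  obtain a1 a2 a3 a4 d1 d2 where p: "p = (a1, a2, a3, a4, d1, d2)"
    by (cases p)
  have "good_partition (a1, a2, a3, a4, d1, d2) \<or> good_partition (a4, a3, a2, a1, d2, d1)
      \<or> good_partition (a2, a1, a4, a3, d1, d2) \<or> good_partition (a3, a4, a1, a2, d2, d1)"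
    unfolding good_partition_def prod.case by presburger
  then show ?thesis
    by (auto simp: partition_orbit_def p)
qed

lemma good_partition_orbit_unique:
  assumes "good_partition p" and "q \<in> partition_orbit p" and "good_partition q"
  shows "q = p"
proof -
  obtain a1 a2 a3 a4 d1 d2 where p: "p = (a1, a2, a3, a4, d1, d2)"
    by (cases p)
  have "good_partition (a1, a2, a3, a4, d1, d2) \<Longrightarrow> good_partition (a4, a3, a2, a1, d2, d1)
      \<Longrightarrow> (a4, a3, a2, a1, d2, d1) = (a1, a2, a3, a4, d1, d2)"
    and "good_partition (a1, a2, a3, a4, d1, d2) \<Longrightarrow> good_partition (a2, a1, a4, a3, d1, d2)
      \<Longrightarrow> (a2, a1, a4, a3, d1, d2) = (a1, a2, a3, a4, d1, d2)"
    and "good_partition (a1, a2, a3, a4, d1, d2) \<Longrightarrow> good_partition (a3, a4, a1, a2, d2, d1)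
      \<Longrightarrow> (a3, a4, a1, a2, d2, d1) = (a1, a2, a3, a4, d1, d2)"
    unfolding good_partition_def prod.case prod.inject by presburger+
  then show ?thesis
    using assms unfolding partition_orbit_def p by auto
qed

lemma card_image_Int:
  assumes "inj_on g G" and "b \<subseteq> G" and "\<And>x. x \<in> G \<Longrightarrow> g x \<in> A \<longleftrightarrow> x \<in> B"
  shows "card (g ` b \<inter> A) = card (b \<inter> B)"
proof -
  have "g ` b \<inter> A = g ` (b \<inter> B)"
    using assms(2,3) by blast
  moreover have "inj_on g (b \<inter> B)"
    using assms(1) by (rule inj_on_subset) (use assms(2) in blast)
  ultimately show ?thesis
    by (simp add: card_image)
qed

lemmas region_defs = grid_def Lambda1_def Lambda2_def Lambda3_def Lambda4_def
  Delta1_def Delta2_def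

lemma symgroup_inj_on_grid: "g \<in> symgroup k l \<Longrightarrow> inj_on g (grid k l)"
  by (auto simp: symgroup_def inj_on_def grid_def reflH_def reflV_def rot180_def)

lemma symgroup_image_boards:
  assumes "g \<in> symgroup k l" and "b \<in> boards k l r"
  shows "g ` b \<in> boards k l r"
proof -
  have "g ` grid k l \<subseteq> grid k l"
    using assms(1) by (auto simp: symgroup_def grid_def reflH_def reflV_def rot180_def)
  moreover have "inj_on g b"
    using symgroup_inj_on_grid[OF assms(1)] by (rule inj_on_subset)
      (use assms(2) in \<open>simp add: boards_def\<close>)
  ultimately show ?thesis
    using assms(2) by (auto simp: boards_def card_image)
qed

lemma board_partition_reflH:
  assumes "b \<subseteq> grid k l"
  shows "board_partition k l (reflH k l ` b) = partition_reflH (board_partition k l b)"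
proof -
  have inj: "inj_on (reflH k l) (grid k l)"
    by (simp add: symgroup_inj_on_grid symgroup_def)
  have "reflH k l x \<in> Lambda1 k l \<longleftrightarrow> x \<in> Lambda4 k l"
    "reflH k l x \<in> Lambda2 k l \<longleftrightarrow> x \<in> Lambda3 k l"
    "reflH k l x \<in> Lambda3 k l \<longleftrightarrow> x \<in> Lambda2 k l"
    "reflH k l x \<in> Lambda4 k l \<longleftrightarrow> x \<in> Lambda1 k l"
    "reflH k l x \<in> Delta1 k l \<longleftrightarrow> x \<in> Delta2 k l"
    "reflH k l x \<in> Delta2 k l \<longleftrightarrow> x \<in> Delta1 k l"
    if "x \<in> grid k l" for x
    using that by (cases x; auto simp: region_defs reflH_def)+
  then show ?thesis
    unfolding board_partition_def
    by (simp add: card_image_Int[OF inj assms])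
qed

lemma board_partition_reflV:
  assumes "b \<subseteq> grid k l"
  shows "board_partition k l (reflV k l ` b) = partition_reflV (board_partition k l b)"
proof -
  have inj: "inj_on (reflV k l) (grid k l)"
    by (simp add: symgroup_inj_on_grid symgroup_def)
  have "reflV k l x \<in> Lambda1 k l \<longleftrightarrow> x \<in> Lambda2 k l"
    "reflV k l x \<in> Lambda2 k l \<longleftrightarrow> x \<in> Lambda1 k l"
    "reflV k l x \<in> Lambda3 k l \<longleftrightarrow> x \<in> Lambda4 k l"
    "reflV k l x \<in> Lambda4 k l \<longleftrightarrow> x \<in> Lambda3 k l"
    "reflV k l x \<in> Delta1 k l \<longleftrightarrow> x \<in> Delta1 k l"
    "reflV k l x \<in> Delta2 k l \<longleftrightarrow> x \<in> Delta2 k l"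
    if "x \<in> grid k l" for x
    using that by (cases x; auto simp: region_defs reflV_def)+
  then show ?thesis
    unfolding board_partition_def
    by (simp add: card_image_Int[OF inj assms])
qed

lemma board_partition_rot180:
  assumes "b \<subseteq> grid k l"
  shows "board_partition k l (rot180 k l ` b) = partition_rot180 (board_partition k l b)"
proof -
  have inj: "inj_on (rot180 k l) (grid k l)"
    by (simp add: symgroup_inj_on_grid symgroup_def)
  have "rot180 k l x \<in> Lambda1 k l \<longleftrightarrow> x \<in> Lambda3 k l"
    "rot180 k l x \<in> Lambda2 k l \<longleftrightarrow> x \<in> Lambda4 k l"
    "rot180 k l x \<in> Lambda3 k l \<longleftrightarrow> x \<in> Lambda1 k l"
    "rot180 k l x \<in> Lambda4 k l \<longleftrightarrow> x \<in> Lambda2 k l"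
    "rot180 k l x \<in> Delta1 k l \<longleftrightarrow> x \<in> Delta2 k l"
    "rot180 k l x \<in> Delta2 k l \<longleftrightarrow> x \<in> Delta1 k l"
    if "x \<in> grid k l" for x
    using that by (cases x; auto simp: region_defs rot180_def)+
  then show ?thesis
    unfolding board_partition_def
    by (simp add: card_image_Int[OF inj assms])
qed

lemma board_partition_symgroup_image:
  assumes "b \<subseteq> grid k l"
  shows "(\<lambda>g. board_partition k l (g ` b)) ` symgroup k l = partition_orbit (board_partition k l b)"
  using assms
  by (simp add: symgroup_def partition_orbit_def board_partition_reflH board_partition_reflV
      board_partition_rot180)

theorem theorem4p9:
  fixes k l r :: nat
  assumes "k \<ge> 1" and "l \<ge> 1" and "1 \<le> r" and "r \<le> 2*k*(2*l+1)"
  shows "(\<exists>P. boards_bar k l r = (\<Union>p\<in>P. partition_class k l r p)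
              \<and> disjoint_family_on (partition_class k l r) P)
    \<and> (\<forall>b\<in>boards k l r. \<exists>b'\<in>boards_bar k l r. equivalent k l b b')
    \<and> (\<forall>b\<in>boards_bar k l r. \<forall>b'\<in>boards_bar k l r.
          equivalent k l b b' \<longrightarrow> board_partition k l b = board_partition k l b')"
proof (intro conjI ballI impI)
  show "\<exists>P. boards_bar k l r = (\<Union>p\<in>P. partition_class k l r p)
              \<and> disjoint_family_on (partition_class k l r) P"
    by (rule exI[of _ "Collect good_partition"])
      (auto simp: boards_bar_def partition_class_def disjoint_family_on_def)
next
  fix b assume b: "b \<in> boards k l r"
  then have orbit: "(\<lambda>g. board_partition k l (g ` b)) ` symgroup k l
      = partition_orbit (board_partition k l b)"
    by (simp add: board_partition_symgroup_image boards_def)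
  obtain g where "g \<in> symgroup k l" and "good_partition (board_partition k l (g ` b))"
    using good_partition_in_orbit[of "board_partition k l b"] unfolding orbit[symmetric] by blast
  with b show "\<exists>b'\<in>boards_bar k l r. equivalent k l b b'"
    by (auto simp: boards_bar_def equivalent_def intro: symgroup_image_boards)
next
  fix b b' assume b: "b \<in> boards_bar k l r" and b': "b' \<in> boards_bar k l r"
    and "equivalent k l b b'"
  then obtain g where "g \<in> symgroup k l" and "b' = g ` b"
    by (auto simp: equivalent_def)
  then have "board_partition k l b' \<in> partition_orbit (board_partition k l b)"
    using b board_partition_symgroup_image[of b k l]
    by (auto simp: boards_bar_def boards_def)
  with b b' show "board_partition k l b = board_partition k l b'"
    by (metis (mono_tags) good_partition_orbit_unique boards_bar_def mem_Collect_eq)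
qed

end
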